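(* Let $(\Omega,+)$ be a group and $a,b$ subgroups with $a\top b$. Then $a^\top\cap{}^\top b=\{x\subseteq\Omega: a\top x,\ x\top b\}$ is stable under the ternary law $(x,y,z)\mapsto\Gamma(x,a,y,b,z)$ on the power set of $\Omega$, and with the induced law it is a torsor, denoted $U_{ab}$, which is naturally isomorphic (via left graphs $F\mapsto\{\alpha+F(\alpha):\alpha\in a\}$) to the torsor of all bijections $F:a\to b$ with torsor law $(XYZ)=Z\circ Y^{-1}\circ X$.
   Context: $(\Omega,+)$ is a group written additively but not necessarily abelian. For subsets $x,y$, $x\top y$ means every $\omega\in\Omega$ has a unique decomposition $\omega=\xi+\eta$ with $\xi\in x,\eta\in y$. $\Gamma(x,a,y,b,z)=\{\omega:\exists\alpha\in a,\beta\in b:\ \alpha+\omega+\beta\in y,\ \alpha+\omega\in z,\ \omega+\beta\in x\}$. A torsor is a set $G$ with a map $(x,y,z)\mapsto(xyz)$ such that $(xy(zuv))=(x(uzy)v)=((xyz)uv)$ and $(xxy)=y=(yxx)$ for all elements. *)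

theory Defs
  imports Main "HOL-Library.FuncSet"
begin

definition add_subgroup :: "'a::group_add set \<Rightarrow> bool" where
  "add_subgroup a \<longleftrightarrow> 0 \<in> a \<and> (\<forall>x\<in>a. \<forall>y\<in>a. x + y \<in> a) \<and> (\<forall>x\<in>a. - x \<in> a)"

definition transv :: "'a::group_add set \<Rightarrow> 'a set \<Rightarrow> bool" where
  "transv x y \<longleftrightarrow> (\<forall>\<omega>. \<exists>!p. fst p \<in> x \<and> snd p \<in> y \<and> \<omega> = fst p + snd p)"

definition Gamma :: "'a::group_add set \<Rightarrow> 'a set \<Rightarrow> 'a set \<Rightarrow> 'a set \<Rightarrow> 'a set \<Rightarrow> 'a set" where
  "Gamma x a y b z = {\<omega>. \<exists>\<alpha>\<in>a. \<exists>\<beta>\<in>b. \<alpha> + \<omega> + \<beta> \<in> y \<and> \<alpha> + \<omega> \<in> z \<and> \<omega> + \<beta> \<in> x}"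

definition torsor :: "'g set \<Rightarrow> ('g \<Rightarrow> 'g \<Rightarrow> 'g \<Rightarrow> 'g) \<Rightarrow> bool" where
  "torsor G m \<longleftrightarrow>
     (\<forall>x\<in>G. \<forall>y\<in>G. \<forall>z\<in>G. m x y z \<in> G) \<and>
     (\<forall>x\<in>G. \<forall>y\<in>G. \<forall>z\<in>G. \<forall>u\<in>G. \<forall>v\<in>G.
        m x y (m z u v) = m x (m u z y) v \<and> m x (m u z y) v = m (m x y z) u v) \<and>
     (\<forall>x\<in>G. \<forall>y\<in>G. m x x y = y \<and> m y x x = y)"

definition Uab :: "'a::group_add set \<Rightarrow> 'a set \<Rightarrow> 'a set set" where
  "Uab a b = {x. transv a x \<and> transv x b}"

definition bijs :: "'a set \<Rightarrow> 'a set \<Rightarrow> ('a \<Rightarrow> 'a) set" where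
  "bijs a b = {F. F \<in> a \<rightarrow>\<^sub>E b \<and> bij_betw F a b}"

definition bij_law :: "'a set \<Rightarrow> ('a \<Rightarrow> 'a) \<Rightarrow> ('a \<Rightarrow> 'a) \<Rightarrow> ('a \<Rightarrow> 'a) \<Rightarrow> ('a \<Rightarrow> 'a)" where
  "bij_law a X Y Z = (\<lambda>\<alpha>\<in>a. Z (inv_into a Y (X \<alpha>)))"

definition left_graph :: "'a::group_add set \<Rightarrow> ('a \<Rightarrow> 'a) \<Rightarrow> 'a set" where
  "left_graph a F = {\<alpha> + F \<alpha> | \<alpha>. \<alpha> \<in> a}"

end

theory Submission
  imports Defs
begin

text \<open>Bijections \<open>a \<rightarrow> b\<close> form a torsor under \<open>Z \<circ> Y\<inverse> \<circ> X\<close> for trivial reasons,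
so everything rests on the left-graph map. If \<open>x \<top> b\<close>, each coset \<open>\<alpha> + b\<close> meets \<open>x\<close> in exactly
one point \<open>\<alpha> + F \<alpha>\<close>; then \<open>a \<top> x\<close> makes \<open>F\<close> injective and \<open>a \<top> b\<close> makes it surjective, so
\<open>x\<close> is the left graph of a bijection, and conversely every such graph lies in \<open>a\<^sup>\<top> \<inter> \<^sup>\<top>b\<close>.
A direct computation shows that left graphs turn \<open>Z \<circ> Y\<inverse> \<circ> X\<close> into \<open>\<Gamma>\<close>; the torsor axioms,
closure included, are then transported along this bijection.\<close>

lemma add_subgroup_zero: "add_subgroup a \<Longrightarrow> 0 \<in> a"
  and add_subgroup_add: "add_subgroup a \<Longrightarrow> x \<in> a \<Longrightarrow> y \<in> a \<Longrightarrow> x + y \<in> a"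
  and add_subgroup_minus: "add_subgroup a \<Longrightarrow> x \<in> a \<Longrightarrow> - x \<in> a"
  by (simp_all add: add_subgroup_def)

lemma add_subgroup_diff: "add_subgroup a \<Longrightarrow> x \<in> a \<Longrightarrow> y \<in> a \<Longrightarrow> x - y \<in> a"
  unfolding diff_conv_add_uminus by (intro add_subgroup_add add_subgroup_minus)

lemma transvE:
  assumes "transv x y"
  obtains \<xi> \<eta> where "\<xi> \<in> x" "\<eta> \<in> y" "\<omega> = \<xi> + \<eta>"
  using assms unfolding transv_def by fastforce

lemma transv_unique:
  assumes "transv x y" "\<xi> \<in> x" "\<eta> \<in> y" "\<xi>' \<in> x" "\<eta>' \<in> y" "\<xi> + \<eta> = \<xi>' + \<eta>'"
  shows "\<xi> = \<xi>' \<and> \<eta> = \<eta>'"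
proof -
  from assms(1) have "\<exists>!p. fst p \<in> x \<and> snd p \<in> y \<and> \<xi> + \<eta> = fst p + snd p"
    unfolding transv_def by blast
  then have "(\<xi>, \<eta>) = (\<xi>', \<eta>')"
    using assms(2-6) by (metis fst_conv snd_conv)
  then show ?thesis by simp
qed

lemma transvI:
  assumes "\<And>\<omega>. \<exists>\<xi>\<in>x. \<exists>\<eta>\<in>y. \<omega> = \<xi> + \<eta>"
    and "\<And>\<xi> \<eta> \<xi>' \<eta>'. \<xi> \<in> x \<Longrightarrow> \<eta> \<in> y \<Longrightarrow> \<xi>' \<in> x \<Longrightarrow> \<eta>' \<in> y \<Longrightarrow>
           \<xi> + \<eta> = \<xi>' + \<eta>' \<Longrightarrow> \<xi> = \<xi>' \<and> \<eta> = \<eta>'"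
  shows "transv x y"
  unfolding transv_def
proof
  fix \<omega>
  obtain \<xi> \<eta> where "\<xi> \<in> x" "\<eta> \<in> y" "\<omega> = \<xi> + \<eta>" using assms(1) by blast
  then show "\<exists>!p. fst p \<in> x \<and> snd p \<in> y \<and> \<omega> = fst p + snd p"
    using assms(2) by (intro ex1I[of _ "(\<xi>, \<eta>)"]) (auto simp: prod_eq_iff)
qed

lemma torsor_transfer:
  assumes "torsor G m" and H: "f ` G = H"
    and hom: "\<And>x y z. x \<in> G \<Longrightarrow> y \<in> G \<Longrightarrow> z \<in> G \<Longrightarrow> f (m x y z) = m' (f x) (f y) (f z)"
  shows "torsor H m'"
proof -
  have closed: "m x y z \<in> G" if "x \<in> G" "y \<in> G" "z \<in> G" for x y z
    using \<open>torsor G m\<close> that unfolding torsor_def by blast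
  show ?thesis
    unfolding torsor_def H[symmetric] ball_simps
    using \<open>torsor G m\<close> unfolding torsor_def by (simp add: hom[symmetric] closed)
qed

lemma bijsD:
  assumes "F \<in> bijs a b"
  shows "F \<in> a \<rightarrow>\<^sub>E b" "bij_betw F a b" "\<alpha> \<in> a \<Longrightarrow> F \<alpha> \<in> b" "inj_on F a"
  using assms unfolding bijs_def bij_betw_def by auto

lemma bijs_inv_into:
  assumes "F \<in> bijs a b" "\<beta> \<in> b"
  shows "inv_into a F \<beta> \<in> a" "F (inv_into a F \<beta>) = \<beta>"
  using assms unfolding bijs_def bij_betw_def by (auto intro: inv_into_into f_inv_into_f)

lemma bijs_inv_into_eq:
  assumes "F \<in> bijs a b" "\<alpha> \<in> a"
  shows "inv_into a F (F \<alpha>) = \<alpha>"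
  using bijsD(4)[OF assms(1)] assms(2) by (rule inv_into_f_f)

lemma bijs_eqI:
  assumes "F \<in> bijs a b" "G \<in> bijs a b" "\<And>\<alpha>. \<alpha> \<in> a \<Longrightarrow> F \<alpha> = G \<alpha>"
  shows "F = G"
  using bijsD(1)[OF assms(1)] bijsD(1)[OF assms(2)] assms(3) by (rule PiE_ext)

lemma bij_law_apply: "\<alpha> \<in> a \<Longrightarrow> bij_law a X Y Z \<alpha> = Z (inv_into a Y (X \<alpha>))"
  by (simp add: bij_law_def)

lemma bij_law_in_bijs:
  assumes "X \<in> bijs a b" "Y \<in> bijs a b" "Z \<in> bijs a b"
  shows "bij_law a X Y Z \<in> bijs a b"
proof -
  have "bij_betw (Z \<circ> inv_into a Y \<circ> X) a b"
    using bijsD(2)[OF assms(1)] bij_betw_inv_into[OF bijsD(2)[OF assms(2)]] bijsD(2)[OF assms(3)]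
    by (auto intro: bij_betw_trans)
  then have "bij_betw (bij_law a X Y Z) a b"
    by (rule bij_betw_cong[THEN iffD1, rotated]) (simp add: bij_law_apply)
  moreover have "bij_law a X Y Z \<in> a \<rightarrow>\<^sub>E b"
    unfolding bij_law_def restrict_PiE_iff
    using bijsD(3)[OF assms(1)] bijs_inv_into(1)[OF assms(2)] bijsD(3)[OF assms(3)] by blast
  ultimately show ?thesis unfolding bijs_def by blast
qed

lemma inv_into_bij_law:
  assumes "X \<in> bijs a b" "Y \<in> bijs a b" "Z \<in> bijs a b" "\<beta> \<in> b"
  shows "inv_into a (bij_law a X Y Z) \<beta> = inv_into a X (Y (inv_into a Z \<beta>))"
proof -
  let ?\<alpha> = "inv_into a X (Y (inv_into a Z \<beta>))"
  have "?\<alpha> \<in> a"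
    using assms by (simp add: bijsD(3) bijs_inv_into(1))
  moreover have "bij_law a X Y Z ?\<alpha> = \<beta>"
    using assms \<open>?\<alpha> \<in> a\<close> by (simp add: bij_law_apply bijsD(3) bijs_inv_into bijs_inv_into_eq)
  ultimately show ?thesis
    using bijs_inv_into_eq[OF bij_law_in_bijs[OF assms(1-3)]] by metis
qed

lemma torsor_bijs: "torsor (bijs a b) (bij_law a)"
  unfolding torsor_def
proof (intro conjI ballI)
  fix x y z assume "x \<in> bijs a b" "y \<in> bijs a b" "z \<in> bijs a b"
  then show "bij_law a x y z \<in> bijs a b" by (rule bij_law_in_bijs)
next
  fix x y z u v
  assume B: "x \<in> bijs a b" "y \<in> bijs a b" "z \<in> bijs a b" "u \<in> bijs a b" "v \<in> bijs a b"
  note simps = bij_law_apply inv_into_bij_law[where b=b] bij_law_in_bijs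
    bijsD(3)[where a=a and b=b] bijs_inv_into(1)[where a=a and b=b] B
  show "bij_law a x y (bij_law a z u v) = bij_law a x (bij_law a u z y) v"
    by (rule bijs_eqI[where a=a and b=b]) (simp_all add: simps)
  show "bij_law a x (bij_law a u z y) v = bij_law a (bij_law a x y z) u v"
    by (rule bijs_eqI[where a=a and b=b]) (simp_all add: simps)
next
  fix x y assume B: "x \<in> bijs a b" "y \<in> bijs a b"
  note simps = bij_law_apply bij_law_in_bijs bijsD(3)[where a=a and b=b]
    bijs_inv_into[where a=a and b=b] bijs_inv_into_eq[where b=b] B
  show "bij_law a x x y = y" "bij_law a y x x = y"
    by (rule bijs_eqI[where a=a and b=b]; simp add: simps)+
qed

lemma mem_left_graph: "\<omega> \<in> left_graph a F \<longleftrightarrow> (\<exists>\<alpha>\<in>a. \<omega> = \<alpha> + F \<alpha>)"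
  by (auto simp: left_graph_def)

lemma transv_left_graph_right:
  assumes "add_subgroup b" "transv a b" "F \<in> a \<rightarrow> b"
  shows "transv (left_graph a F) b"
proof (rule transvI)
  fix \<omega>
  obtain \<gamma> \<delta> where "\<gamma> \<in> a" "\<delta> \<in> b" "\<omega> = \<gamma> + \<delta>" using transvE[OF assms(2)] .
  then have "\<gamma> + F \<gamma> \<in> left_graph a F" "- F \<gamma> + \<delta> \<in> b" "\<omega> = (\<gamma> + F \<gamma>) + (- F \<gamma> + \<delta>)"
    using assms(1,3) by (auto simp: mem_left_graph add.assoc intro: add_subgroup_add add_subgroup_minus)
  then show "\<exists>\<xi>\<in>left_graph a F. \<exists>\<eta>\<in>b. \<omega> = \<xi> + \<eta>" by blast
next
  fix \<xi> \<eta> \<xi>' \<eta>'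
  assume "\<xi> \<in> left_graph a F" "\<eta> \<in> b" "\<xi>' \<in> left_graph a F" "\<eta>' \<in> b" "\<xi> + \<eta> = \<xi>' + \<eta>'"
  then obtain \<alpha> \<alpha>' where \<alpha>: "\<alpha> \<in> a" "\<xi> = \<alpha> + F \<alpha>" and \<alpha>': "\<alpha>' \<in> a" "\<xi>' = \<alpha>' + F \<alpha>'"
    and eq: "\<alpha> + (F \<alpha> + \<eta>) = \<alpha>' + (F \<alpha>' + \<eta>')"
    by (auto simp: mem_left_graph add.assoc)
  have "\<alpha> = \<alpha>'"
    using transv_unique[OF assms(2) \<alpha>(1) _ \<alpha>'(1) _ eq] assms(1,3) \<alpha>(1) \<alpha>'(1) \<open>\<eta> \<in> b\<close> \<open>\<eta>' \<in> b\<close>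
    by (auto intro: add_subgroup_add)
  with \<alpha> \<alpha>' eq show "\<xi> = \<xi>' \<and> \<eta> = \<eta>'" by simp
qed

lemma transv_left_graph_left:
  assumes "add_subgroup a" "transv a b" "F \<in> bijs a b"
  shows "transv a (left_graph a F)"
proof (rule transvI)
  fix \<omega>
  obtain \<gamma> \<delta> where "\<gamma> \<in> a" "\<delta> \<in> b" "\<omega> = \<gamma> + \<delta>" using transvE[OF assms(2)] .
  moreover define \<alpha> where "\<alpha> = inv_into a F \<delta>"
  ultimately have "\<alpha> \<in> a" "F \<alpha> = \<delta>"
    using assms(3) bijs_inv_into by auto
  with \<open>\<gamma> \<in> a\<close> have "\<gamma> + - \<alpha> \<in> a"
    using assms(1) by (intro add_subgroup_add add_subgroup_minus)
  moreover have "\<alpha> + F \<alpha> \<in> left_graph a F" using \<open>\<alpha> \<in> a\<close> by (auto simp: mem_left_graph)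
  moreover have "\<omega> = (\<gamma> + - \<alpha>) + (\<alpha> + F \<alpha>)"
    using \<open>\<omega> = \<gamma> + \<delta>\<close> \<open>F \<alpha> = \<delta>\<close> by (simp flip: add.assoc)
  ultimately show "\<exists>\<xi>\<in>a. \<exists>\<eta>\<in>left_graph a F. \<omega> = \<xi> + \<eta>" by blast
next
  fix \<xi> \<eta> \<xi>' \<eta>'
  assume "\<xi> \<in> a" "\<eta> \<in> left_graph a F" "\<xi>' \<in> a" "\<eta>' \<in> left_graph a F" "\<xi> + \<eta> = \<xi>' + \<eta>'"
  then obtain \<alpha> \<alpha>' where \<alpha>: "\<alpha> \<in> a" "\<eta> = \<alpha> + F \<alpha>" and \<alpha>': "\<alpha>' \<in> a" "\<eta>' = \<alpha>' + F \<alpha>'"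
    and eq: "(\<xi> + \<alpha>) + F \<alpha> = (\<xi>' + \<alpha>') + F \<alpha>'"
    by (auto simp: mem_left_graph add.assoc)
  have "\<xi> + \<alpha> = \<xi>' + \<alpha>' \<and> F \<alpha> = F \<alpha>'"
    using transv_unique[OF assms(2) _ _ _ _ eq] assms(1,3) \<alpha>(1) \<alpha>'(1) \<open>\<xi> \<in> a\<close> \<open>\<xi>' \<in> a\<close>
    by (auto intro: add_subgroup_add bijsD(3))
  moreover from this have "\<alpha> = \<alpha>'"
    using bijsD(4)[OF assms(3)] \<alpha>(1) \<alpha>'(1) by (auto dest: inj_onD)
  ultimately show "\<xi> = \<xi>' \<and> \<eta> = \<eta>'" using \<alpha> \<alpha>' by simp
qed

lemma left_graph_in_Uab:
  assumes "add_subgroup a" "add_subgroup b" "transv a b" "F \<in> bijs a b"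
  shows "left_graph a F \<in> Uab a b"
  using transv_left_graph_left[OF assms(1,3,4)] transv_left_graph_right[OF assms(2,3)] assms(4)
  by (auto simp: Uab_def bijs_def)

lemma transv_ex1_add_right:
  assumes "add_subgroup b" "transv x b"
  shows "\<exists>!\<beta>. \<beta> \<in> b \<and> \<alpha> + \<beta> \<in> x"
proof (rule ex_ex1I)
  obtain \<xi> \<beta> where "\<xi> \<in> x" "\<beta> \<in> b" "\<alpha> = \<xi> + \<beta>" using transvE[OF assms(2)] .
  then have "- \<beta> \<in> b \<and> \<alpha> + - \<beta> \<in> x"
    using assms(1) by (simp add: add_subgroup_minus add.assoc)
  then show "\<exists>\<beta>. \<beta> \<in> b \<and> \<alpha> + \<beta> \<in> x" ..
next
  fix \<beta> \<beta>' assume "\<beta> \<in> b \<and> \<alpha> + \<beta> \<in> x" "\<beta>' \<in> b \<and> \<alpha> + \<beta>' \<in> x"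
  moreover have "(\<alpha> + \<beta>) + (- \<beta> + \<beta>') = (\<alpha> + \<beta>') + 0" by (simp add: add.assoc)
  ultimately have "- \<beta> + \<beta>' = 0"
    using transv_unique[OF assms(2)] assms(1)
    by (meson add_subgroup_add add_subgroup_minus add_subgroup_zero)
  then show "\<beta> = \<beta>'" by (metis add_minus_cancel add_0_right)
qed

definition graph_fun :: "'a::group_add set \<Rightarrow> 'a set \<Rightarrow> 'a set \<Rightarrow> 'a \<Rightarrow> 'a" where
  "graph_fun a b x = (\<lambda>\<alpha>\<in>a. THE \<beta>. \<beta> \<in> b \<and> \<alpha> + \<beta> \<in> x)"

lemma graph_fun_mem:
  assumes "add_subgroup b" "transv x b" "\<alpha> \<in> a"
  shows "graph_fun a b x \<alpha> \<in> b" "\<alpha> + graph_fun a b x \<alpha> \<in> x"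
  using theI'[OF transv_ex1_add_right[OF assms(1,2)]] assms(3) by (simp_all add: graph_fun_def)

lemma graph_fun_eqI:
  assumes "add_subgroup b" "transv x b" "\<alpha> \<in> a" "\<beta> \<in> b" "\<alpha> + \<beta> \<in> x"
  shows "graph_fun a b x \<alpha> = \<beta>"
  using the1_equality[OF transv_ex1_add_right[OF assms(1,2)]] assms(3-5) by (simp add: graph_fun_def)

lemma left_graph_graph_fun:
  assumes "add_subgroup b" "transv a b" "transv x b"
  shows "left_graph a (graph_fun a b x) = x"
proof
  show "left_graph a (graph_fun a b x) \<subseteq> x"
    using graph_fun_mem[OF assms(1,3)] by (auto simp: mem_left_graph)
  show "x \<subseteq> left_graph a (graph_fun a b x)"
  proof
    fix \<omega> assume "\<omega> \<in> x"
    obtain \<alpha> \<beta> where "\<alpha> \<in> a" "\<beta> \<in> b" "\<omega> = \<alpha> + \<beta>" using transvE[OF assms(2)] .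
    with \<open>\<omega> \<in> x\<close> show "\<omega> \<in> left_graph a (graph_fun a b x)"
      using graph_fun_eqI[OF assms(1,3)] by (auto simp: mem_left_graph)
  qed
qed

lemma graph_fun_left_graph:
  assumes "add_subgroup b" "transv a b" "F \<in> a \<rightarrow>\<^sub>E b"
  shows "graph_fun a b (left_graph a F) = F"
proof (rule PiE_ext[OF _ assms(3)])
  have "transv (left_graph a F) b"
    using assms by (intro transv_left_graph_right) auto
  then show "graph_fun a b (left_graph a F) \<in> a \<rightarrow>\<^sub>E b"
    using graph_fun_mem(1)[OF assms(1)] by (simp add: graph_fun_def)
  fix \<alpha> assume "\<alpha> \<in> a"
  with \<open>transv (left_graph a F) b\<close> show "graph_fun a b (left_graph a F) \<alpha> = F \<alpha>"
    using assms by (intro graph_fun_eqI) (auto simp: mem_left_graph)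
qed

lemma graph_fun_in_bijs:
  assumes "add_subgroup a" "add_subgroup b" "transv a b" "x \<in> Uab a b"
  shows "graph_fun a b x \<in> bijs a b"
proof -
  let ?F = "graph_fun a b x"
  have ax: "transv a x" and xb: "transv x b" using assms(4) by (auto simp: Uab_def)
  note F = graph_fun_mem[OF assms(2) xb]
  have "inj_on ?F a"
  proof (rule inj_onI)
    fix \<alpha> \<alpha>' assume "\<alpha> \<in> a" "\<alpha>' \<in> a" "?F \<alpha> = ?F \<alpha>'"
    then have "(\<alpha>' + - \<alpha>) + (\<alpha> + ?F \<alpha>) = 0 + (\<alpha>' + ?F \<alpha>')" by (simp flip: add.assoc)
    then have "\<alpha>' + - \<alpha> = 0"
      using transv_unique[OF ax] F(2) \<open>\<alpha> \<in> a\<close> \<open>\<alpha>' \<in> a\<close> assms(1)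
      by (meson add_subgroup_add add_subgroup_minus add_subgroup_zero)
    then show "\<alpha> = \<alpha>'" by simp
  qed
  moreover have "?F ` a = b"
  proof
    show "?F ` a \<subseteq> b" using F(1) by auto
    show "b \<subseteq> ?F ` a"
    proof
      fix \<beta> assume "\<beta> \<in> b"
      obtain \<alpha>' \<xi> where "\<alpha>' \<in> a" "\<xi> \<in> x" "\<beta> = \<alpha>' + \<xi>" using transvE[OF ax] .
      obtain \<alpha> \<beta>' where "\<alpha> \<in> a" "\<beta>' \<in> b" "\<xi> = \<alpha> + \<beta>'" using transvE[OF assms(3)] .
      have "(\<alpha>' + \<alpha>) + \<beta>' = 0 + \<beta>"
        using \<open>\<beta> = \<alpha>' + \<xi>\<close> \<open>\<xi> = \<alpha> + \<beta>'\<close> by (simp add: add.assoc)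
      then have "\<beta>' = \<beta>"
        using transv_unique[OF assms(3)] \<open>\<alpha>' \<in> a\<close> \<open>\<alpha> \<in> a\<close> \<open>\<beta>' \<in> b\<close> \<open>\<beta> \<in> b\<close> assms(1)
        by (meson add_subgroup_add add_subgroup_zero)
      moreover have "?F \<alpha> = \<beta>'"
        using graph_fun_eqI[OF assms(2) xb] \<open>\<alpha> \<in> a\<close> \<open>\<beta>' \<in> b\<close> \<open>\<xi> \<in> x\<close> \<open>\<xi> = \<alpha> + \<beta>'\<close> by blast
      ultimately show "\<beta> \<in> ?F ` a" using \<open>\<alpha> \<in> a\<close> by blast
    qed
  qed
  moreover have "?F \<in> a \<rightarrow>\<^sub>E b" using F(1) by (simp add: graph_fun_def)
  ultimately show ?thesis by (simp add: bijs_def bij_betw_def)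
qed

lemma left_graph_bij_law_subset_Gamma:
  assumes "add_subgroup a" "add_subgroup b"
    and X: "X \<in> bijs a b" and Y: "Y \<in> bijs a b" and Z: "Z \<in> bijs a b"
  shows "left_graph a (bij_law a X Y Z) \<subseteq> Gamma (left_graph a X) a (left_graph a Y) b (left_graph a Z)"
proof
  fix \<omega> assume "\<omega> \<in> left_graph a (bij_law a X Y Z)"
  then obtain \<alpha> where "\<alpha> \<in> a" and \<omega>: "\<omega> = \<alpha> + bij_law a X Y Z \<alpha>" by (auto simp: mem_left_graph)
  define \<gamma> where "\<gamma> = inv_into a Y (X \<alpha>)"
  have "X \<alpha> \<in> b" using X \<open>\<alpha> \<in> a\<close> by (rule bijsD(3))
  then have "\<gamma> \<in> a" "Y \<gamma> = X \<alpha>" unfolding \<gamma>_def using Y by (auto intro: bijs_inv_into)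
  moreover have "Z \<gamma> \<in> b" using Z \<open>\<gamma> \<in> a\<close> by (rule bijsD(3))
  moreover have "\<omega> = \<alpha> + Z \<gamma>" using \<omega> \<open>\<alpha> \<in> a\<close> by (simp add: bij_law_apply \<gamma>_def)
  ultimately have "\<gamma> - \<alpha> \<in> a" "- Z \<gamma> + X \<alpha> \<in> b"
    using assms(1,2) \<open>\<alpha> \<in> a\<close> \<open>X \<alpha> \<in> b\<close>
    by (simp_all add: add_subgroup_diff add_subgroup_add add_subgroup_minus)
  have "(\<gamma> - \<alpha>) + \<omega> = \<gamma> + Z \<gamma>"
    unfolding \<open>\<omega> = \<alpha> + Z \<gamma>\<close> by (simp flip: add.assoc)
  then have "(\<gamma> - \<alpha>) + \<omega> \<in> left_graph a Z"
    and "(\<gamma> - \<alpha>) + \<omega> + (- Z \<gamma> + X \<alpha>) \<in> left_graph a Y"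
    using \<open>\<gamma> \<in> a\<close> \<open>Y \<gamma> = X \<alpha>\<close>[symmetric] by (auto simp: mem_left_graph add.assoc)
  moreover have "\<omega> + (- Z \<gamma> + X \<alpha>) \<in> left_graph a X"
    unfolding \<open>\<omega> = \<alpha> + Z \<gamma>\<close> using \<open>\<alpha> \<in> a\<close> by (auto simp: mem_left_graph add.assoc)
  ultimately show "\<omega> \<in> Gamma (left_graph a X) a (left_graph a Y) b (left_graph a Z)"
    using \<open>\<gamma> - \<alpha> \<in> a\<close> \<open>- Z \<gamma> + X \<alpha> \<in> b\<close> unfolding Gamma_def by blast
qed

lemma Gamma_subset_left_graph_bij_law:
  assumes "add_subgroup a" "add_subgroup b" "transv a b"
    and X: "X \<in> bijs a b" and Y: "Y \<in> bijs a b" and Z: "Z \<in> bijs a b"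
  shows "Gamma (left_graph a X) a (left_graph a Y) b (left_graph a Z) \<subseteq> left_graph a (bij_law a X Y Z)"
proof
  fix \<omega> assume "\<omega> \<in> Gamma (left_graph a X) a (left_graph a Y) b (left_graph a Z)"
  then obtain \<alpha> \<beta> \<alpha>\<^sub>X \<alpha>\<^sub>Y \<alpha>\<^sub>Z where "\<alpha> \<in> a" "\<beta> \<in> b" "\<alpha>\<^sub>X \<in> a" "\<alpha>\<^sub>Y \<in> a" "\<alpha>\<^sub>Z \<in> a"
    and Y_eq: "\<alpha> + \<omega> + \<beta> = \<alpha>\<^sub>Y + Y \<alpha>\<^sub>Y"
    and Z_eq: "\<alpha> + \<omega> = \<alpha>\<^sub>Z + Z \<alpha>\<^sub>Z"
    and X_eq: "\<omega> + \<beta> = \<alpha>\<^sub>X + X \<alpha>\<^sub>X"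
    unfolding Gamma_def mem_left_graph by blast
  note in_b = bijsD(3)[OF X \<open>\<alpha>\<^sub>X \<in> a\<close>] bijsD(3)[OF Y \<open>\<alpha>\<^sub>Y \<in> a\<close>] bijsD(3)[OF Z \<open>\<alpha>\<^sub>Z \<in> a\<close>]
  have "(\<alpha> + \<alpha>\<^sub>X) + X \<alpha>\<^sub>X = \<alpha>\<^sub>Y + Y \<alpha>\<^sub>Y"
    using Y_eq X_eq by (simp add: add.assoc)
  then have X_Y: "\<alpha> + \<alpha>\<^sub>X = \<alpha>\<^sub>Y \<and> X \<alpha>\<^sub>X = Y \<alpha>\<^sub>Y"
    using transv_unique[OF assms(3)] assms(1) \<open>\<alpha> \<in> a\<close> \<open>\<alpha>\<^sub>X \<in> a\<close> \<open>\<alpha>\<^sub>Y \<in> a\<close> in_b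
    by (meson add_subgroup_add)
  have "\<alpha>\<^sub>Z + (Z \<alpha>\<^sub>Z + \<beta>) = \<alpha>\<^sub>Y + Y \<alpha>\<^sub>Y"
    using Y_eq Z_eq by (simp add: add.assoc)
  then have "\<alpha>\<^sub>Z = \<alpha>\<^sub>Y"
    using transv_unique[OF assms(3)] assms(2) \<open>\<beta> \<in> b\<close> \<open>\<alpha>\<^sub>Z \<in> a\<close> \<open>\<alpha>\<^sub>Y \<in> a\<close> in_b
    by (meson add_subgroup_add)
  have "inv_into a Y (X \<alpha>\<^sub>X) = \<alpha>\<^sub>Y"
    using bijs_inv_into_eq[OF Y \<open>\<alpha>\<^sub>Y \<in> a\<close>] X_Y by simp
  have "\<omega> = - \<alpha> + (\<alpha> + \<omega>)" by (simp add: add.assoc)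
  also have "\<dots> = - \<alpha> + ((\<alpha> + \<alpha>\<^sub>X) + Z \<alpha>\<^sub>Y)" using Z_eq X_Y \<open>\<alpha>\<^sub>Z = \<alpha>\<^sub>Y\<close> by simp
  also have "\<dots> = \<alpha>\<^sub>X + bij_law a X Y Z \<alpha>\<^sub>X"
    using \<open>inv_into a Y (X \<alpha>\<^sub>X) = \<alpha>\<^sub>Y\<close> \<open>\<alpha>\<^sub>X \<in> a\<close> by (simp add: add.assoc bij_law_apply)
  finally show "\<omega> \<in> left_graph a (bij_law a X Y Z)"
    using \<open>\<alpha>\<^sub>X \<in> a\<close> by (auto simp: mem_left_graph)
qed

lemma left_graph_bij_law:
  assumes "add_subgroup a" "add_subgroup b" "transv a b"
    and "X \<in> bijs a b" "Y \<in> bijs a b" "Z \<in> bijs a b"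
  shows "left_graph a (bij_law a X Y Z) = Gamma (left_graph a X) a (left_graph a Y) b (left_graph a Z)"
  using left_graph_bij_law_subset_Gamma[OF assms(1,2,4-6)] Gamma_subset_left_graph_bij_law[OF assms]
  by (rule subset_antisym)

lemma bij_betw_left_graph:
  assumes "add_subgroup a" "add_subgroup b" "transv a b"
  shows "bij_betw (left_graph a) (bijs a b) (Uab a b)"
proof (rule bij_betw_byWitness[where f' = "graph_fun a b"])
  show "\<forall>F\<in>bijs a b. graph_fun a b (left_graph a F) = F"
    using graph_fun_left_graph[OF assms(2,3)] by (simp add: bijs_def)
  show "\<forall>x\<in>Uab a b. left_graph a (graph_fun a b x) = x"
    using left_graph_graph_fun[OF assms(2,3)] by (simp add: Uab_def)
  show "left_graph a ` bijs a b \<subseteq> Uab a b"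
    using left_graph_in_Uab[OF assms] by blast
  show "graph_fun a b ` Uab a b \<subseteq> bijs a b"
    using graph_fun_in_bijs[OF assms] by blast
qed

theorem theorem4p4:
  fixes a b :: "'a::group_add set"
  assumes "add_subgroup a" and "add_subgroup b" and "transv a b"
  shows "(\<forall>x\<in>Uab a b. \<forall>y\<in>Uab a b. \<forall>z\<in>Uab a b. Gamma x a y b z \<in> Uab a b)
     \<and> torsor (Uab a b) (\<lambda>x y z. Gamma x a y b z)
     \<and> torsor (bijs a b) (bij_law a)
     \<and> bij_betw (left_graph a) (bijs a b) (Uab a b)
     \<and> (\<forall>X\<in>bijs a b. \<forall>Y\<in>bijs a b. \<forall>Z\<in>bijs a b.
          left_graph a (bij_law a X Y Z)
            = Gamma (left_graph a X) a (left_graph a Y) b (left_graph a Z))"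
proof -
  have hom: "\<forall>X\<in>bijs a b. \<forall>Y\<in>bijs a b. \<forall>Z\<in>bijs a b.
      left_graph a (bij_law a X Y Z) = Gamma (left_graph a X) a (left_graph a Y) b (left_graph a Z)"
    using left_graph_bij_law[OF assms] by blast
  have torsor_Uab: "torsor (Uab a b) (\<lambda>x y z. Gamma x a y b z)"
    using torsor_bijs bij_betw_imp_surj_on[OF bij_betw_left_graph[OF assms]]
    by (rule torsor_transfer) (rule left_graph_bij_law[OF assms])
  then have "\<forall>x\<in>Uab a b. \<forall>y\<in>Uab a b. \<forall>z\<in>Uab a b. Gamma x a y b z \<in> Uab a b"
    unfolding torsor_def by (rule conjunct1)
  with torsor_Uab torsor_bijs bij_betw_left_graph[OF assms] hom show ?thesis by blast
qed

end
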